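(* Let $H[A,B]$ be a cubic brace distinct from $\mathbb{C}_4$. Then every pair $(a,b)$ with $a\in A$ and $b\in B$ is $\lambda$-matchable. Consequently, if $H\neq\Theta$ then $\rho(H)=\beta'(H)$.
   Context: Graphs are loopless but may have parallel edges. $\Theta$ has two vertices and three parallel edges; $\mathbb{C}_4$ is the $4$-cycle with every other edge doubled. A brace is a bipartite matching covered graph with no nontrivial tight cut (a cut $C$ is tight if $|C\cap M|=1$ for every perfect matching $M$, trivial if a shore has at most one vertex). For a connected bipartite cubic graph $H[A,B]$, $a\in A$, $b\in B$, an $(a,b)$-matching is a spanning subgraph in which $a,b$ have degree $3$ and all other vertices degree $1$; $(a,b)$ is $\lambda$-matchable if one exists; $\rho(H)$ is the number of $\lambda$-matchable pairs. For a matching covered graph, $\beta'$ is $\sum (n(J)/2)^2$ over all braces $J$ of order at least $6$ in its tight cut decomposition; for a brace $H$ of order at least $6$ this is $(n(H)/2)^2$, and $\beta'(\Theta)=0$. *)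

theory Defs
  imports Main
begin

text \<open>Finite loopless multigraphs: vertex set V, edge set E, and an endpoint map
  ends assigning to every edge a set of exactly two vertices (parallel edges allowed).\<close>

definition multigraph :: "'v set \<Rightarrow> 'e set \<Rightarrow> ('e \<Rightarrow> 'v set) \<Rightarrow> bool" where
  "multigraph V E ends \<longleftrightarrow> finite V \<and> finite E \<and>
     (\<forall>e\<in>E. ends e \<subseteq> V \<and> card (ends e) = 2)"

definition sdeg :: "'e set \<Rightarrow> ('e \<Rightarrow> 'v set) \<Rightarrow> 'v \<Rightarrow> nat" where
  "sdeg F ends v = card {e\<in>F. v \<in> ends e}"

definition cubic :: "'v set \<Rightarrow> 'e set \<Rightarrow> ('e \<Rightarrow> 'v set) \<Rightarrow> bool" where
  "cubic V E ends \<longleftrightarrow> (\<forall>v\<in>V. sdeg E ends v = 3)"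

definition connected_mg :: "'v set \<Rightarrow> 'e set \<Rightarrow> ('e \<Rightarrow> 'v set) \<Rightarrow> bool" where
  "connected_mg V E ends \<longleftrightarrow> V \<noteq> {} \<and>
     (\<forall>u\<in>V. \<forall>v\<in>V. (u, v) \<in> {(x, y). \<exists>e\<in>E. ends e = {x, y}}\<^sup>*)"

definition perfect_matching :: "'v set \<Rightarrow> 'e set \<Rightarrow> ('e \<Rightarrow> 'v set) \<Rightarrow> 'e set \<Rightarrow> bool" where
  "perfect_matching V E ends M \<longleftrightarrow> M \<subseteq> E \<and> (\<forall>v\<in>V. sdeg M ends v = 1)"

definition matching_covered :: "'v set \<Rightarrow> 'e set \<Rightarrow> ('e \<Rightarrow> 'v set) \<Rightarrow> bool" where
  "matching_covered V E ends \<longleftrightarrow> connected_mg V E ends \<and> E \<noteq> {} \<and>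
     (\<forall>e\<in>E. \<exists>M. perfect_matching V E ends M \<and> e \<in> M)"

definition cut :: "'e set \<Rightarrow> ('e \<Rightarrow> 'v set) \<Rightarrow> 'v set \<Rightarrow> 'e set" where
  "cut E ends X = {e\<in>E. card (ends e \<inter> X) = 1}"

definition tight_cut :: "'v set \<Rightarrow> 'e set \<Rightarrow> ('e \<Rightarrow> 'v set) \<Rightarrow> 'v set \<Rightarrow> bool" where
  "tight_cut V E ends X \<longleftrightarrow> X \<subseteq> V \<and>
     (\<forall>M. perfect_matching V E ends M \<longrightarrow> card (cut E ends X \<inter> M) = 1)"

definition nontrivial_shore :: "'v set \<Rightarrow> 'v set \<Rightarrow> bool" where
  "nontrivial_shore V X \<longleftrightarrow> card X \<ge> 2 \<and> card (V - X) \<ge> 2"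

definition bipartite_parts :: "'v set \<Rightarrow> 'e set \<Rightarrow> ('e \<Rightarrow> 'v set) \<Rightarrow> 'v set \<Rightarrow> 'v set \<Rightarrow> bool" where
  "bipartite_parts V E ends A B \<longleftrightarrow> A \<union> B = V \<and> A \<inter> B = {} \<and>
     (\<forall>e\<in>E. card (ends e \<inter> A) = 1 \<and> card (ends e \<inter> B) = 1)"

definition brace :: "'v set \<Rightarrow> 'e set \<Rightarrow> ('e \<Rightarrow> 'v set) \<Rightarrow> 'v set \<Rightarrow> 'v set \<Rightarrow> bool" where
  "brace V E ends A B \<longleftrightarrow> bipartite_parts V E ends A B \<and> matching_covered V E ends \<and>
     \<not> (\<exists>X. tight_cut V E ends X \<and> nontrivial_shore V X)"

definition ab_matching :: "'v set \<Rightarrow> 'e set \<Rightarrow> ('e \<Rightarrow> 'v set) \<Rightarrow> 'v \<Rightarrow> 'v \<Rightarrow> 'e set \<Rightarrow> bool" where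
  "ab_matching V E ends a b F \<longleftrightarrow> F \<subseteq> E \<and> sdeg F ends a = 3 \<and> sdeg F ends b = 3 \<and>
     (\<forall>v\<in>V - {a, b}. sdeg F ends v = 1)"

definition lambda_matchable :: "'v set \<Rightarrow> 'e set \<Rightarrow> ('e \<Rightarrow> 'v set) \<Rightarrow> 'v \<Rightarrow> 'v \<Rightarrow> bool" where
  "lambda_matchable V E ends a b \<longleftrightarrow> (\<exists>F. ab_matching V E ends a b F)"

definition rho :: "'v set \<Rightarrow> 'e set \<Rightarrow> ('e \<Rightarrow> 'v set) \<Rightarrow> 'v set \<Rightarrow> 'v set \<Rightarrow> nat" where
  "rho V E ends A B = card {(a, b). a \<in> A \<and> b \<in> B \<and> lambda_matchable V E ends a b}"

text \<open>beta' of a brace: its tight cut decomposition is itself, so beta' is (n/2)^2 if n \<ge> 6 and 0 otherwise.\<close>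
definition beta'_brace :: "'v set \<Rightarrow> nat" where
  "beta'_brace V = (if card V \<ge> 6 then (card V div 2)^2 else 0)"

definition mg_iso :: "'v set \<Rightarrow> 'e set \<Rightarrow> ('e \<Rightarrow> 'v set) \<Rightarrow> 'w set \<Rightarrow> 'f set \<Rightarrow> ('f \<Rightarrow> 'w set) \<Rightarrow> bool" where
  "mg_iso V E ends V' E' ends' \<longleftrightarrow> (\<exists>f g. bij_betw f V V' \<and> bij_betw g E E' \<and>
     (\<forall>e\<in>E. ends' (g e) = f ` ends e))"

definition Theta_V :: "nat set" where "Theta_V = {0, 1}"
definition Theta_E :: "nat set" where "Theta_E = {0, 1, 2}"
definition Theta_ends :: "nat \<Rightarrow> nat set" where "Theta_ends e = {0, 1}"

text \<open>C4: the 4-cycle 0-1-2-3-0 with edges 01 and 23 doubled.\<close>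
definition C4_V :: "nat set" where "C4_V = {0, 1, 2, 3}"
definition C4_E :: "nat set" where "C4_E = {0, 1, 2, 3, 4, 5}"
definition C4_ends :: "nat \<Rightarrow> nat set" where
  "C4_ends e = (if e \<le> 1 then {0, 1} else if e = 2 then {1, 2}
                else if e \<le> 4 then {2, 3} else {3, 0})"

end

(* Counting the 3|S| edges at a set S of one colour class A of a cubic bipartite graph gives
   |N(S)| >= |S|.  Connectivity turns equality for nonempty S into S = A, and
   |N(S)| = |S| + 1 would make S \<union> N(S) a tight cut.  So in a brace |N(S)| >= |S| + 2
   whenever S is nonempty and |S| <= |A| - 2.  For |A| >= 3 this makes every vertex have three
   distinct neighbours, and an (a,b)-matching consists of all edges at a and at b together with
   a perfect matching between A - ({a} \<union> N(b)) and B - ({b} \<union> N(a)); Hall's condition for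
   such a set S follows from the surplus of S \<union> {a}, which loses only the three neighbours
   of a.  A brace with |A| = 1 is Theta, and one with |A| = 2 is C4. *)

theory Submission
  imports Defs
begin

section \<open>Hall's marriage theorem\<close>

lemma SDR_Un:
  assumes f: "inj_on f S" "\<forall>x\<in>S. f x \<in> N x" and g: "inj_on g T" "\<forall>x\<in>T. g x \<in> N x"
    and disjoint: "f ` S \<inter> g ` T = {}"
  shows "\<exists>h. inj_on h (S \<union> T) \<and> (\<forall>x\<in>S \<union> T. h x \<in> N x)"
proof (intro exI conjI)
  show "inj_on (\<lambda>x. if x \<in> S then f x else g x) (S \<union> T)"
  proof (rule inj_onI)
    fix x y
    assume x: "x \<in> S \<union> T" and y: "y \<in> S \<union> T"
      and eq: "(if x \<in> S then f x else g x) = (if y \<in> S then f y else g y)"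
    have "f u \<noteq> g w" if "u \<in> S" "w \<in> T" for u w
      using disjoint that by blast
    with x y eq show "x = y"
      by (metis UnE inj_onD[OF f(1)] inj_onD[OF g(1)])
  qed
  show "\<forall>x\<in>S \<union> T. (if x \<in> S then f x else g x) \<in> N x" using f(2) g(2) by auto
qed

lemma Hall_condition_remove_critical:
  assumes fin: "finite X" "\<forall>x\<in>X. finite (N x)"
    and Hall: "\<forall>S\<subseteq>X. card S \<le> card (\<Union>(N ` S))"
    and S: "S \<subseteq> X" "card (\<Union>(N ` S)) \<le> card S"
  shows "\<forall>T\<subseteq>X - S. card T \<le> card (\<Union>x\<in>T. N x - \<Union>(N ` S))"
proof (intro allI impI)
  fix T assume T: "T \<subseteq> X - S"
  have finite_sub: "finite Y" if "Y \<subseteq> X" for Y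
    using that fin(1) by (rule finite_subset)
  have finite_UN: "finite (\<Union>(N ` Y))" if "Y \<subseteq> X" for Y
    using finite_sub[OF that] that fin(2) by blast
  have "card T + card S = card (T \<union> S)"
    using T S finite_sub[of T] finite_sub[of S] by (intro card_Un_disjoint[symmetric]) auto
  also have "\<dots> \<le> card (\<Union>(N ` (T \<union> S)))" using Hall T S by (meson Diff_subset Un_least order_trans)
  also have "\<dots> = card ((\<Union>x\<in>T. N x - \<Union>(N ` S)) \<union> \<Union>(N ` S))"
    by (rule arg_cong[where f = card]) auto
  also have "\<dots> = card (\<Union>x\<in>T. N x - \<Union>(N ` S)) + card (\<Union>(N ` S))"
    using T S finite_UN[of T] finite_UN[of S] by (intro card_Un_disjoint) auto
  finally show "card T \<le> card (\<Union>x\<in>T. N x - \<Union>(N ` S))" using S(2) by linarith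
qed

lemma Hall_condition_remove_point:
  assumes surplus: "\<forall>S\<subseteq>X. S \<noteq> {} \<longrightarrow> S \<noteq> X \<longrightarrow> card S < card (\<Union>(N ` S))"
    and x: "x \<in> X"
  shows "\<forall>T\<subseteq>X - {x}. card T \<le> card (\<Union>u\<in>T. N u - {y})"
proof (intro allI impI)
  fix T assume T: "T \<subseteq> X - {x}"
  show "card T \<le> card (\<Union>u\<in>T. N u - {y})"
  proof (cases "T = {}")
    case False
    then have "card T < card (\<Union>(N ` T))" using surplus T x by blast
    moreover have "(\<Union>u\<in>T. N u - {y}) = \<Union>(N ` T) - {y}" by blast
    ultimately show ?thesis by (auto simp: card_Diff_singleton_if)
  qed simp
qed

theorem Hall_marriage:
  assumes "finite X" "\<forall>x\<in>X. finite (N x)" "\<forall>S\<subseteq>X. card S \<le> card (\<Union>(N ` S))"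
  shows "\<exists>f. inj_on f X \<and> (\<forall>x\<in>X. f x \<in> N x)"
  using assms
proof (induction "card X" arbitrary: X N rule: less_induct)
  case less
  note fin = less.prems(1,2) and Hall = less.prems(3)
  consider "X = {}"
    | (critical) S where "S \<subseteq> X" "S \<noteq> {}" "S \<noteq> X" "card (\<Union>(N ` S)) \<le> card S"
    | (surplus) x where "x \<in> X" "\<forall>S\<subseteq>X. S \<noteq> {} \<longrightarrow> S \<noteq> X \<longrightarrow> card S < card (\<Union>(N ` S))"
    by (metis all_not_in_conv not_le)
  then show ?case
  proof cases
    case 1
    then show ?thesis by simp
  next
    case critical
    have "card S < card X" using critical fin(1) by (intro psubset_card_mono) auto
    moreover have "finite S" using critical(1) fin(1) by (rule finite_subset)
    moreover have "\<forall>x\<in>S. finite (N x)" "\<forall>T\<subseteq>S. card T \<le> card (\<Union>(N ` T))"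
      using fin(2) Hall critical(1) by auto
    ultimately obtain f where f: "inj_on f S" "\<forall>x\<in>S. f x \<in> N x"
      using less.hyps by blast
    have "card (X - S) < card X" using critical fin(1) by (intro psubset_card_mono) auto
    moreover have "finite (X - S)" "\<forall>x\<in>X - S. finite (N x - \<Union>(N ` S))" using fin by auto
    ultimately obtain g where g: "inj_on g (X - S)" "\<forall>x\<in>X - S. g x \<in> N x - \<Union>(N ` S)"
      using less.hyps[OF _ _ _ Hall_condition_remove_critical[OF fin Hall critical(1,4)]] by meson
    have "f ` S \<subseteq> \<Union>(N ` S)" using f(2) by blast
    moreover have "g ` (X - S) \<inter> \<Union>(N ` S) = {}" using g(2) by blast
    ultimately have "f ` S \<inter> g ` (X - S) = {}" by blast
    moreover have "\<forall>x\<in>X - S. g x \<in> N x" using g(2) by blast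
    ultimately have "\<exists>h. inj_on h (S \<union> (X - S)) \<and> (\<forall>x\<in>S \<union> (X - S). h x \<in> N x)"
      using f g(1) by (intro SDR_Un)
    moreover have "S \<union> (X - S) = X" using critical(1) by blast
    ultimately show ?thesis by simp
  next
    case surplus
    have "card {x} \<le> card (N x)" using Hall surplus(1) by auto
    then obtain y where y: "y \<in> N x" by fastforce
    have "card (X - {x}) < card X" using surplus(1) fin(1) by (rule card_Diff1_less[rotated])
    moreover have "finite (X - {x})" "\<forall>u\<in>X - {x}. finite (N u - {y})" using fin by auto
    ultimately obtain g where g: "inj_on g (X - {x})" "\<forall>u\<in>X - {x}. g u \<in> N u - {y}"
      using less.hyps[OF _ _ _ Hall_condition_remove_point[OF surplus(2,1)]] by meson
    have "(\<lambda>_. y) ` {x} \<inter> g ` (X - {x}) = {}" using g(2) by blast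
    moreover have "\<forall>u\<in>X - {x}. g u \<in> N u" using g(2) by blast
    ultimately have "\<exists>h. inj_on h ({x} \<union> (X - {x})) \<and> (\<forall>u\<in>{x} \<union> (X - {x}). h u \<in> N u)"
      using y g(1) by (intro SDR_Un) auto
    moreover have "{x} \<union> (X - {x}) = X" using surplus(1) by blast
    ultimately show ?thesis by metis
  qed
qed

section \<open>Bipartite multigraphs\<close>

definition neighbours :: "'e set \<Rightarrow> ('e \<Rightarrow> 'v set) \<Rightarrow> 'v set \<Rightarrow> 'v set" where
  "neighbours E ends S = {v. \<exists>e\<in>E. \<exists>u\<in>S. ends e = {u, v}}"

definition incident_edges :: "'e set \<Rightarrow> ('e \<Rightarrow> 'v set) \<Rightarrow> 'v set \<Rightarrow> 'e set" where
  "incident_edges F ends T = {e\<in>F. ends e \<inter> T \<noteq> {}}"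

lemma neighbours_singleton_sym: "x \<in> neighbours E ends {y} \<longleftrightarrow> y \<in> neighbours E ends {x}"
  by (auto simp: neighbours_def insert_commute)

lemma card_incident_edges:
  assumes "finite F" "\<forall>e\<in>F. card (ends e \<inter> P) = 1" "T \<subseteq> P" "finite T"
    and "\<forall>v\<in>T. sdeg F ends v = d"
  shows "card (incident_edges F ends T) = d * card T"
proof -
  have "card (ends e \<inter> P) = 1 \<Longrightarrow> v \<in> ends e \<inter> P \<Longrightarrow> w \<in> ends e \<inter> P \<Longrightarrow> v = w" for e v w
    by (metis card_1_singletonE singletonD)
  then have disjoint: "{e\<in>F. v \<in> ends e} \<inter> {e\<in>F. w \<in> ends e} = {}" if "v \<in> T" "w \<in> T" "v \<noteq> w" for v w
    using that assms(2,3) by blast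
  have "incident_edges F ends T = (\<Union>v\<in>T. {e\<in>F. v \<in> ends e})"
    by (auto simp: incident_edges_def)
  then have "card (incident_edges F ends T) = (\<Sum>v\<in>T. card {e\<in>F. v \<in> ends e})"
    using assms(1,4) disjoint by (simp add: card_UN_disjoint)
  also have "\<dots> = d * card T" using assms(5) by (simp add: sdeg_def)
  finally show ?thesis .
qed

lemma bij_betw_fibrewise:
  assumes "finite E" "finite E'" "\<forall>e\<in>E. p e \<in> K" "\<forall>e'\<in>E'. q e' \<in> K"
    and "\<forall>k\<in>K. card {e\<in>E. p e = k} = card {e'\<in>E'. q e' = k}"
  obtains g where "bij_betw g E E'" "\<forall>e\<in>E. q (g e) = p e"
proof -
  have "\<forall>k\<in>K. \<exists>h. bij_betw h {e\<in>E. p e = k} {e'\<in>E'. q e' = k}"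
    using assms(1,2,5) by (auto intro: finite_same_card_bij)
  then obtain h where h: "\<forall>k\<in>K. bij_betw (h k) {e\<in>E. p e = k} {e'\<in>E'. q e' = k}" by metis
  then have g: "h (p e) e \<in> E' \<and> q (h (p e) e) = p e" if "e \<in> E" for e
    using that assms(3) by (auto dest: bij_betwE)
  have "inj_on (\<lambda>e. h (p e) e) E"
  proof (rule inj_onI)
    fix e d assume ed: "e \<in> E" "d \<in> E" "h (p e) e = h (p d) d"
    then have "p e = p d" using g by metis
    then show "e = d" using ed h assms(3) by (auto simp: bij_betw_def dest: inj_onD)
  qed
  moreover have "E' \<subseteq> (\<lambda>e. h (p e) e) ` E"
  proof
    fix e' assume "e' \<in> E'"
    then have "e' \<in> h (q e') ` {e\<in>E. p e = q e'}" using h assms(4) by (auto simp: bij_betw_def)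
    then show "e' \<in> (\<lambda>e. h (p e) e) ` E" by (auto intro: rev_image_eqI)
  qed
  ultimately have "bij_betw (\<lambda>e. h (p e) e) E E'" using g by (auto simp: bij_betw_def)
  with g show ?thesis using that by blast
qed

lemma mg_isoI:
  assumes "bij_betw f V V'" "finite E" "finite E'"
    and "\<forall>e\<in>E. f ` ends e \<in> K" "\<forall>e'\<in>E'. ends' e' \<in> K"
    and "\<forall>k\<in>K. card {e\<in>E. f ` ends e = k} = card {e'\<in>E'. ends' e' = k}"
  shows "mg_iso V E ends V' E' ends'"
proof -
  obtain g where "bij_betw g E E'" "\<forall>e\<in>E. ends' (g e) = f ` ends e"
    using assms(2-6) by (rule bij_betw_fibrewise)
  with assms(1) show ?thesis unfolding mg_iso_def by blast
qed

lemma card_doubleton_Int_eq_1: "x \<noteq> y \<Longrightarrow> card ({x, y} \<inter> X) = 1 \<longleftrightarrow> (x \<in> X \<longleftrightarrow> y \<notin> X)"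
  by (cases "x \<in> X"; cases "y \<in> X") auto

lemma connected_mg_closed_subset:
  assumes "connected_mg V E ends" "x \<in> V" "x \<in> X"
    and closed: "\<And>e u v. e \<in> E \<Longrightarrow> ends e = {u, v} \<Longrightarrow> u \<in> X \<Longrightarrow> v \<in> X"
  shows "V \<subseteq> X"
proof
  fix v assume "v \<in> V"
  with assms(1,2) have "(x, v) \<in> {(u, w). \<exists>e\<in>E. ends e = {u, w}}\<^sup>*"
    by (auto simp: connected_mg_def)
  then show "v \<in> X"
    by (induction rule: rtrancl_induct) (use assms(3) closed in auto)
qed

lemma rho_eq_if_lambda_matchable:
  assumes "\<forall>a\<in>A. \<forall>b\<in>B. lambda_matchable V E ends a b"
  shows "rho V E ends A B = card A * card B"
proof -
  have "{(a, b). a \<in> A \<and> b \<in> B \<and> lambda_matchable V E ends a b} = A \<times> B" using assms by auto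
  then show ?thesis by (simp add: rho_def card_cartesian_product)
qed

locale bipartite_multigraph =
  fixes V :: "'v set" and E :: "'e set" and ends :: "'e \<Rightarrow> 'v set" and A B :: "'v set"
  assumes multigraph: "multigraph V E ends"
    and bipartite: "bipartite_parts V E ends A B"
begin

lemma swap: "bipartite_multigraph V E ends B A"
  using multigraph bipartite by (auto simp: bipartite_multigraph_def bipartite_parts_def)

lemma finite_V: "finite V" and finite_E: "finite E"
  using multigraph by (auto simp: multigraph_def)

lemma V_eq: "V = A \<union> B" and disjoint: "A \<inter> B = {}"
  using bipartite by (auto simp: bipartite_parts_def)

lemma finite_A: "finite A" and finite_B: "finite B"
  using finite_V V_eq by auto

lemma card_V: "card V = card A + card B"
  using finite_A finite_B disjoint by (simp add: V_eq card_Un_disjoint)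

lemma card_ends: "e \<in> E \<Longrightarrow> card (ends e) = 2" and ends_subset: "e \<in> E \<Longrightarrow> ends e \<subseteq> V"
  using multigraph by (auto simp: multigraph_def)

lemma finite_ends: "e \<in> E \<Longrightarrow> finite (ends e)"
  using ends_subset finite_V by (rule finite_subset)

lemma card_ends_A: "e \<in> E \<Longrightarrow> card (ends e \<inter> A) = 1"
  and card_ends_B: "e \<in> E \<Longrightarrow> card (ends e \<inter> B) = 1"
  using bipartite by (auto simp: bipartite_parts_def)

lemma edge_ends:
  assumes "e \<in> E"
  obtains x y where "x \<in> A" "y \<in> B" "ends e = {x, y}"
proof -
  obtain x where x: "ends e \<inter> A = {x}" using card_ends_A[OF assms] by (meson card_1_singletonE)
  obtain y where y: "ends e \<inter> B = {y}" using card_ends_B[OF assms] by (meson card_1_singletonE)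
  have "ends e = (ends e \<inter> A) \<union> (ends e \<inter> B)" using ends_subset[OF assms] V_eq by auto
  with x y that show ?thesis by auto
qed

lemma ends_eq:
  assumes "e \<in> E" "x \<in> ends e" "y \<in> ends e" "x \<noteq> y"
  shows "ends e = {x, y}"
  using assms by (elim edge_ends) auto

lemma neighbours_subset: "S \<subseteq> A \<Longrightarrow> neighbours E ends S \<subseteq> B"
  using disjoint by (fastforce simp: neighbours_def doubleton_eq_iff elim!: edge_ends)

lemma finite_neighbours: "finite (neighbours E ends S)"
proof (rule finite_subset)
  show "neighbours E ends S \<subseteq> V" using ends_subset by (fastforce simp: neighbours_def)
qed (rule finite_V)

lemma incident_edges_subset_neighbours:
  assumes "S \<subseteq> A" "F \<subseteq> E"
  shows "incident_edges F ends S \<subseteq> incident_edges F ends (neighbours E ends S)"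
proof
  fix e assume e: "e \<in> incident_edges F ends S"
  then have "e \<in> E" using assms(2) by (auto simp: incident_edges_def)
  then obtain x y where xy: "x \<in> A" "y \<in> B" "ends e = {x, y}" by (rule edge_ends)
  then have "x \<in> S" using e assms(1) disjoint by (auto simp: incident_edges_def)
  then have "y \<in> neighbours E ends S" using \<open>e \<in> E\<close> xy(3) by (auto simp: neighbours_def)
  then show "e \<in> incident_edges F ends (neighbours E ends S)"
    using e xy(3) by (auto simp: incident_edges_def)
qed

lemma card_neighbours_singleton_le:
  assumes "F \<subseteq> {e\<in>E. x \<in> ends e}" "\<forall>v\<in>neighbours E ends {x}. \<exists>e\<in>F. v \<in> ends e"
  shows "card (neighbours E ends {x}) \<le> card F"
proof -
  have finite_F: "finite F" by (rule finite_subset[OF _ finite_E]) (use assms(1) in blast)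
  have "card (ends e - {x}) = 1" if "e \<in> F" for e
    using that assms(1) card_ends by (auto simp: card_Diff_singleton)
  moreover have "neighbours E ends {x} \<subseteq> (\<Union>e\<in>F. ends e - {x})"
    using assms card_ends by (fastforce simp: neighbours_def)
  then have "card (neighbours E ends {x}) \<le> card (\<Union>e\<in>F. ends e - {x})"
    using finite_F assms(1) finite_ends by (intro card_mono) auto
  ultimately show ?thesis using card_UN_le[OF finite_F, of "\<lambda>e. ends e - {x}"] by simp
qed

text \<open>A perfect matching matches S into N(S); the one vertex of N(S) left over is matched
  across the cut.\<close>
lemma tight_cut_neighbourhood:
  assumes S: "S \<subseteq> A" and card_N: "card (neighbours E ends S) = card S + 1"
  shows "tight_cut V E ends (S \<union> neighbours E ends S)"
  unfolding tight_cut_def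
proof (intro conjI allI impI)
  let ?N = "neighbours E ends S"
  have N: "?N \<subseteq> B" using S by (rule neighbours_subset)
  then show "S \<union> ?N \<subseteq> V" using S V_eq by auto
  fix M assume "perfect_matching V E ends M"
  then have M: "M \<subseteq> E" "\<forall>v\<in>V. sdeg M ends v = 1" by (auto simp: perfect_matching_def)
  have finite_M: "finite M" using M(1) finite_E by (rule finite_subset)
  have "card (incident_edges M ends S) = 1 * card S"
    using finite_M M card_ends_A S V_eq finite_subset[OF S finite_A]
    by (intro card_incident_edges[where P = A]) auto
  moreover have "card (incident_edges M ends ?N) = 1 * card ?N"
    using finite_M M card_ends_B N V_eq finite_neighbours
    by (intro card_incident_edges[where P = B]) auto
  moreover have "cut E ends (S \<union> ?N) \<inter> M = incident_edges M ends ?N - incident_edges M ends S"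
  proof (rule set_eqI)
    fix e
    show "e \<in> cut E ends (S \<union> ?N) \<inter> M \<longleftrightarrow> e \<in> incident_edges M ends ?N - incident_edges M ends S"
    proof (cases "e \<in> M")
      case True
      then have "e \<in> E" using M(1) by blast
      then obtain x y where xy: "x \<in> A" "y \<in> B" "ends e = {x, y}" by (rule edge_ends)
      have "x \<noteq> y" "x \<notin> ?N" "y \<notin> S" using xy(1,2) S N disjoint by auto
      moreover have "x \<in> S \<Longrightarrow> y \<in> ?N" using \<open>e \<in> E\<close> xy(3) by (auto simp: neighbours_def)
      moreover have "e \<in> cut E ends (S \<union> ?N) \<longleftrightarrow> (x \<in> S \<union> ?N \<longleftrightarrow> y \<notin> S \<union> ?N)"
        using \<open>e \<in> E\<close> xy(3) card_doubleton_Int_eq_1[OF \<open>x \<noteq> y\<close>] by (simp add: cut_def)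
      ultimately show ?thesis using True xy(3) by (auto simp: incident_edges_def)
    qed (simp add: incident_edges_def)
  qed
  moreover have "incident_edges M ends S \<subseteq> incident_edges M ends ?N"
    using S M(1) by (rule incident_edges_subset_neighbours)
  moreover have "finite (incident_edges M ends T)" for T using finite_M by (simp add: incident_edges_def)
  ultimately show "card (cut E ends (S \<union> ?N) \<inter> M) = 1"
    using card_N by (simp add: card_Diff_subset)
qed

lemma perfect_matching_if_Hall_condition:
  assumes A': "A' \<subseteq> A" and B': "B' \<subseteq> B" and card_eq: "card A' = card B'"
    and Hall: "\<forall>S\<subseteq>A'. card S \<le> card (neighbours E ends S \<inter> B')"
  obtains M where "M \<subseteq> E" "\<forall>e\<in>M. ends e \<subseteq> A' \<union> B'" "\<forall>v\<in>A' \<union> B'. sdeg M ends v = 1"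
proof -
  have "(\<Union>x\<in>S. neighbours E ends {x} \<inter> B') = neighbours E ends S \<inter> B'" for S
    by (auto simp: neighbours_def)
  then obtain f where f: "inj_on f A'" "\<forall>x\<in>A'. f x \<in> neighbours E ends {x} \<inter> B'"
    using Hall_marriage[of A' "\<lambda>x. neighbours E ends {x} \<inter> B'"] Hall
      finite_subset[OF A' finite_A] finite_neighbours by auto
  have "\<forall>x\<in>A'. \<exists>e. e \<in> E \<and> ends e = {x, f x}"
    using f(2) by (auto simp: neighbours_def)
  then obtain g where g: "\<forall>x\<in>A'. g x \<in> E \<and> ends (g x) = {x, f x}" by metis
  have "f ` A' \<subseteq> B'" using f(2) by blast
  moreover have "card (f ` A') = card B'" using card_eq f(1) by (simp add: card_image)
  ultimately have f_onto: "f ` A' = B'" using finite_subset[OF B' finite_B] by (simp add: card_subset_eq)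
  have f_B: "f x \<in> B" if "x \<in> A'" for x using f(2) B' that by blast
  have incident: "{e \<in> g ` A'. v \<in> ends e} = g ` {x\<in>A'. v = x \<or> v = f x}" for v
    using g by auto
  have "{x\<in>A'. v = x \<or> v = f x} = {v}" if "v \<in> A'" for v
    using that f_B A' disjoint by auto
  moreover have "{x\<in>A'. v = x \<or> v = f x} = {u}" if "u \<in> A'" "v = f u" for u v
    using that f_B f(1) A' disjoint by (auto dest: inj_onD)
  ultimately have "sdeg (g ` A') ends v = 1" if "v \<in> A' \<union> B'" for v
    using that f_onto by (auto simp: sdeg_def incident)
  moreover have "\<forall>e\<in>g ` A'. ends e \<subseteq> A' \<union> B'" using g f(2) by auto
  moreover have "g ` A' \<subseteq> E" using g by auto
  ultimately show ?thesis using that by blast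
qed

end

locale cubic_bipartite = bipartite_multigraph +
  assumes cubic: "cubic V E ends"
begin

lemma swap_cubic: "cubic_bipartite V E ends B A"
  using swap cubic by (simp add: cubic_bipartite_def cubic_bipartite_axioms_def)

lemma degree: "v \<in> V \<Longrightarrow> card {e\<in>E. v \<in> ends e} = 3"
  using cubic by (simp add: cubic_def sdeg_def)

lemma card_incident_edges_A: "S \<subseteq> A \<Longrightarrow> card (incident_edges E ends S) = 3 * card S"
  using finite_E card_ends_A finite_subset[OF _ finite_A] degree V_eq
  by (intro card_incident_edges[where P = A]) (auto simp: sdeg_def)

lemma card_A_eq_card_B: "card A = card B"
proof -
  interpret swap: cubic_bipartite V E ends B A by (rule swap_cubic)
  have "incident_edges E ends A = E" "incident_edges E ends B = E"
    using card_ends_A card_ends_B by (fastforce simp: incident_edges_def)+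
  then show ?thesis using card_incident_edges_A[of A] swap.card_incident_edges_A[of B] by simp
qed

lemma card_incident_edges_neighbours:
  assumes "S \<subseteq> A"
  shows "card (incident_edges E ends (neighbours E ends S)) = 3 * card (neighbours E ends S)"
proof -
  interpret swap: cubic_bipartite V E ends B A by (rule swap_cubic)
  show ?thesis using assms neighbours_subset by (intro swap.card_incident_edges_A) simp
qed

lemma card_le_card_neighbours:
  assumes "S \<subseteq> A"
  shows "card S \<le> card (neighbours E ends S)"
proof -
  have "card (incident_edges E ends S) \<le> card (incident_edges E ends (neighbours E ends S))"
    using incident_edges_subset_neighbours[OF assms] finite_E
    by (intro card_mono) (auto simp: incident_edges_def)
  then show ?thesis using assms card_incident_edges_A card_incident_edges_neighbours by simp
qed

lemma degree_split:
  assumes "x \<in> A" "B = {y, y'}" "y \<noteq> y'"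
  shows "card {e\<in>E. ends e = {x, y}} + card {e\<in>E. ends e = {x, y'}} = 3"
proof -
  have "e \<in> E \<Longrightarrow> x \<in> ends e \<Longrightarrow> ends e = {x, y} \<or> ends e = {x, y'}" for e
    using assms(1,2) disjoint by (elim edge_ends) auto
  then have "{e\<in>E. x \<in> ends e} = {e\<in>E. ends e = {x, y}} \<union> {e\<in>E. ends e = {x, y'}}" by auto
  moreover have "{e\<in>E. ends e = {x, y}} \<inter> {e\<in>E. ends e = {x, y'}} = {}"
    using assms(3) by (auto simp: doubleton_eq_iff)
  ultimately show ?thesis
    using degree[of x] assms(1) V_eq finite_E by (simp add: card_Un_disjoint)
qed

lemma lambda_matchable_if_card_A_eq_1:
  assumes "card A = 1" "a \<in> A" "b \<in> B"
  shows "lambda_matchable V E ends a b"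
proof -
  have "A = {a}" "B = {b}" using assms card_A_eq_card_B by (metis card_1_singletonE singletonD)+
  then have "V = {a, b}" using V_eq by auto
  then have "ab_matching V E ends a b E" using degree by (auto simp: ab_matching_def sdeg_def)
  then show ?thesis by (auto simp: lambda_matchable_def)
qed

lemma mg_iso_Theta_if_card_A_eq_1:
  assumes "card A = 1"
  shows "mg_iso V E ends Theta_V Theta_E Theta_ends"
proof -
  obtain a b where ab: "A = {a}" "B = {b}"
    using assms card_A_eq_card_B by (metis card_1_singletonE)
  then have "a \<noteq> b" "V = {a, b}" using disjoint V_eq by auto
  have ends_ab: "ends e = {a, b}" if "e \<in> E" for e
    using that ab by (auto elim: edge_ends)
  then have E_eq: "{e\<in>E. a \<in> ends e} = E" by auto
  define f where "f v = (if v = a then 0 else 1::nat)" for v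
  have image: "f ` ends e = {0, 1}" if "e \<in> E" for e
    using ends_ab[OF that] \<open>a \<noteq> b\<close> by (auto simp: f_def)
  then have fibre: "{e\<in>E. f ` ends e = {0, 1}} = E" by (intro equalityI subsetI) simp_all
  show ?thesis
  proof (rule mg_isoI[where K = "{{0, 1}}"])
    show "bij_betw f V Theta_V"
      using \<open>a \<noteq> b\<close> \<open>V = {a, b}\<close> by (auto simp: bij_betw_def inj_on_def Theta_V_def f_def)
    show "\<forall>e\<in>E. f ` ends e \<in> {{0, 1}}" using image by simp
    have "card E = 3" using E_eq degree[of a] \<open>V = {a, b}\<close> by simp
    moreover have "{e'\<in>Theta_E. Theta_ends e' = {0, 1}} = Theta_E" by (simp add: Theta_ends_def)
    moreover have "card Theta_E = 3" by (simp add: Theta_E_def)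
    ultimately show "\<forall>k\<in>{{0, 1}}. card {e\<in>E. f ` ends e = k} = card {e'\<in>Theta_E. Theta_ends e' = k}"
      using fibre by simp
  qed (simp_all add: finite_E Theta_E_def Theta_ends_def)
qed

end

section \<open>Cubic braces\<close>

locale cubic_brace = cubic_bipartite +
  assumes connected: "connected_mg V E ends"
    and no_nontrivial_tight_cut: "\<not> (\<exists>X. tight_cut V E ends X \<and> nontrivial_shore V X)"
begin

lemma swap_brace: "cubic_brace V E ends B A"
  using swap_cubic connected no_nontrivial_tight_cut by (simp add: cubic_brace_def cubic_brace_axioms_def)

text \<open>If |N(S)| \<le> |S|, edge counting shows that every edge at N(S) ends in S, so S \<union> N(S)
  is closed under adjacency.\<close>
lemma eq_A_if_card_neighbours_le:
  assumes S: "S \<subseteq> A" "S \<noteq> {}" and le: "card (neighbours E ends S) \<le> card S"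
  shows "S = A"
proof -
  let ?N = "neighbours E ends S"
  have sub: "incident_edges E ends S \<subseteq> incident_edges E ends ?N"
    using S(1) by (rule incident_edges_subset_neighbours) simp
  moreover have "finite (incident_edges E ends ?N)" using finite_E by (simp add: incident_edges_def)
  moreover have "card (incident_edges E ends ?N) \<le> card (incident_edges E ends S)"
    using le S(1) card_incident_edges_A card_incident_edges_neighbours by simp
  ultimately have same: "incident_edges E ends S = incident_edges E ends ?N" by (metis card_seteq)
  have "v \<in> S \<union> ?N" if "e \<in> E" "ends e = {u, v}" "u \<in> S \<union> ?N" for e u v
  proof -
    obtain x y where xy: "x \<in> A" "y \<in> B" "ends e = {x, y}" using \<open>e \<in> E\<close> by (rule edge_ends)
    have "x \<in> S"
    proof (cases "u \<in> S")
      case False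
      then have "u \<in> ?N" using that(3) by blast
      then have "e \<in> incident_edges E ends S" using same that(1,2) by (auto simp: incident_edges_def)
      then show ?thesis using xy S(1) disjoint by (auto simp: incident_edges_def)
    qed (use that(2) xy S(1) neighbours_subset[OF S(1)] disjoint in auto)
    then have "y \<in> ?N" using \<open>e \<in> E\<close> xy(3) by (auto simp: neighbours_def)
    then show ?thesis using \<open>x \<in> S\<close> that(2) xy(3) by (auto simp: doubleton_eq_iff)
  qed
  moreover obtain s where "s \<in> S" using S(2) by blast
  ultimately have "V \<subseteq> S \<union> ?N" using connected S(1) V_eq
    by (intro connected_mg_closed_subset[of V E ends s]) auto
  then show ?thesis using S(1) V_eq neighbours_subset[OF S(1)] disjoint by auto
qed

lemma neighbours_surplus:
  assumes S: "S \<subseteq> A" "S \<noteq> {}" "card S + 2 \<le> card A"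
  shows "card S + 2 \<le> card (neighbours E ends S)"
proof (rule ccontr)
  let ?N = "neighbours E ends S"
  assume "\<not> ?thesis"
  moreover have "card S \<le> card ?N" using S(1) by (rule card_le_card_neighbours)
  moreover have "\<not> card ?N \<le> card S"
  proof
    assume "card ?N \<le> card S"
    with S(1,2) have "S = A" by (rule eq_A_if_card_neighbours_le)
    then show False using S(3) by simp
  qed
  ultimately have card_N: "card ?N = card S + 1" by linarith
  have "finite S" using S(1) finite_A by (rule finite_subset)
  then have "card (S \<union> ?N) = card S + card ?N"
    using finite_neighbours S(1) neighbours_subset[OF S(1)] disjoint by (intro card_Un_disjoint) auto
  moreover have "card (V - (S \<union> ?N)) = card V - card (S \<union> ?N)"
    using finite_neighbours \<open>finite S\<close> S(1) neighbours_subset[OF S(1)] V_eq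
    by (intro card_Diff_subset) auto
  moreover have "card S \<noteq> 0" using \<open>finite S\<close> S(2) by simp
  ultimately have "nontrivial_shore V (S \<union> ?N)"
    using card_N card_V card_A_eq_card_B S(3) by (simp add: nontrivial_shore_def)
  then show False using tight_cut_neighbourhood[OF S(1) card_N] no_nontrivial_tight_cut by blast
qed

lemma card_neighbours_singleton:
  assumes "3 \<le> card A" "a \<in> A"
  shows "card (neighbours E ends {a}) = 3"
proof -
  have "card (neighbours E ends {a}) \<le> card {e\<in>E. a \<in> ends e}"
    by (rule card_neighbours_singleton_le) (auto simp: neighbours_def)
  moreover have "card {e\<in>E. a \<in> ends e} = 3" using assms(2) V_eq degree by blast
  moreover have "card {a} + 2 \<le> card (neighbours E ends {a})" using assms by (intro neighbours_surplus) auto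
  ultimately show ?thesis by simp
qed

lemma parallel_edges_eq:
  assumes "3 \<le> card A" "e \<in> E" "e' \<in> E" "ends e = ends e'"
  shows "e = e'"
proof (rule ccontr)
  assume "e \<noteq> e'"
  obtain x y where xy: "x \<in> A" "y \<in> B" "ends e = {x, y}" using assms(2) by (rule edge_ends)
  let ?F = "{d\<in>E. x \<in> ends d} - {e'}"
  have "\<exists>d\<in>?F. v \<in> ends d" if v: "v \<in> neighbours E ends {x}" for v
  proof -
    obtain d where d: "d \<in> E" "ends d = {x, v}" using v by (auto simp: neighbours_def)
    show ?thesis
    proof (cases "d = e'")
      case True
      then have "e \<in> ?F" "v \<in> ends e" using \<open>e \<noteq> e'\<close> assms(2,4) xy(3) d(2) by auto
      then show ?thesis by blast
    qed (use d in auto)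
  qed
  then have le: "card (neighbours E ends {x}) \<le> card ?F" by (intro card_neighbours_singleton_le) auto
  have "card {d\<in>E. x \<in> ends d} = 3" using xy(1) V_eq degree by blast
  moreover have "e' \<in> {d\<in>E. x \<in> ends d}" using assms(3,4) xy(3) by auto
  ultimately have "card ?F = 2" by (simp add: card_Diff_singleton)
  with le show False using card_neighbours_singleton[OF assms(1) xy(1)] by simp
qed

lemma card_edges_joining:
  assumes "3 \<le> card A" "v \<in> neighbours E ends {u}"
  shows "card {e\<in>E. ends e = {u, v}} = 1"
proof -
  obtain e where "e \<in> E" "ends e = {u, v}" using assms(2) by (auto simp: neighbours_def)
  then have "{e\<in>E. ends e = {u, v}} = {e}" using parallel_edges_eq[OF assms(1)] by auto
  then show ?thesis by simp
qed

lemma Hall_condition_outside_closed_neighbourhoods: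
  assumes "3 \<le> card A" "a \<in> A" "b \<in> B"
    and A': "A' = A - insert a (neighbours E ends {b})"
    and B': "B' = B - insert b (neighbours E ends {a})"
    and S: "S \<subseteq> A'"
  shows "card S \<le> card (neighbours E ends S \<inter> B')"
proof -
  interpret swap: cubic_brace V E ends B A by (rule swap_brace)
  let ?T = "insert a S" and ?Na = "neighbours E ends {a}" and ?Nb = "neighbours E ends {b}"
  have S_A: "S \<subseteq> A" using S A' by blast
  have "finite S" using S_A finite_A by (rule finite_subset)
  moreover have "a \<notin> S" using S A' by blast
  ultimately have card_T: "card ?T = card S + 1" by simp
  have "card ?Nb = 3" using assms(1,3) card_A_eq_card_B by (intro swap.card_neighbours_singleton) auto
  then have "3 \<le> card (insert a ?Nb)" by (metis card_insert_le finite_neighbours)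
  moreover have "card S \<le> card A'" using S A' finite_A by (intro card_mono) auto
  moreover have "card A' = card A - card (insert a ?Nb)"
    using A' assms(2,3) swap.neighbours_subset finite_neighbours by (simp add: card_Diff_subset)
  moreover have "card (insert a ?Nb) \<le> card A"
    using assms(2,3) swap.neighbours_subset finite_A by (intro card_mono) auto
  ultimately have "card ?T + 2 \<le> card A" using card_T by linarith
  then have surplus: "card S + 3 \<le> card (neighbours E ends ?T)"
    using neighbours_surplus[of ?T] card_T S_A assms(2) by simp
  have "neighbours E ends ?T - ?Na \<subseteq> neighbours E ends S \<inter> B'"
  proof
    fix y assume y: "y \<in> neighbours E ends ?T - ?Na"
    then obtain e u where e: "e \<in> E" "u \<in> S" "ends e = {u, y}"
      by (auto simp: neighbours_def)
    have "y \<in> B" using neighbours_subset[of ?T] y S_A assms(2) by auto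
    moreover have "y \<noteq> b" using e S A' by (auto simp: neighbours_def insert_commute)
    ultimately show "y \<in> neighbours E ends S \<inter> B'"
      using y e B' by (auto simp: neighbours_def)
  qed
  then have "card (neighbours E ends ?T - ?Na) \<le> card (neighbours E ends S \<inter> B')"
    using finite_neighbours by (intro card_mono) auto
  moreover have "card (neighbours E ends ?T) - 3 \<le> card (neighbours E ends ?T - ?Na)"
    using card_neighbours_singleton[OF assms(1,2)] by (metis card_Diff_subset_Int diff_card_le_card_Diff finite_neighbours)
  ultimately show ?thesis using surplus by linarith
qed

lemma sdeg_stars_Un_matching:
  assumes "3 \<le> card A" "a \<in> A" "b \<in> B"
    and A': "A' = A - insert a (neighbours E ends {b})"
    and B': "B' = B - insert b (neighbours E ends {a})"
    and M: "M \<subseteq> E" "\<forall>e\<in>M. ends e \<subseteq> A' \<union> B'" "\<forall>v\<in>A' \<union> B'. sdeg M ends v = 1"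
    and v: "v \<in> V - {a, b}"
  shows "sdeg ({e\<in>E. a \<in> ends e} \<union> {e\<in>E. b \<in> ends e} \<union> M) ends v = 1"
    (is "sdeg ?F ends v = 1")
proof -
  have N: "neighbours E ends {a} \<subseteq> B" "neighbours E ends {b} \<subseteq> A"
    using assms(2,3) neighbours_subset bipartite_multigraph.neighbours_subset[OF swap] by auto
  let ?J = "\<lambda>u. {e\<in>E. ends e = {u, v}}"
  have "a \<noteq> v" "b \<noteq> v" using v by auto
  then have incident: "{e\<in>?F. v \<in> ends e} = ?J a \<union> ?J b \<union> {e\<in>M. v \<in> ends e}"
    using M(1) by (blast dest: ends_eq)
  have no_J: "?J u = {}" if "v \<notin> neighbours E ends {u}" for u
    using that by (auto simp: neighbours_def)
  have no_M: "{e\<in>M. v \<in> ends e} = {}" if "v \<notin> A' \<union> B'"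
    using that M(2) by auto
  consider "v \<in> neighbours E ends {a}" | "v \<in> neighbours E ends {b}" | "v \<in> A' \<union> B'"
    using v V_eq A' B' by blast
  then show ?thesis
  proof cases
    case 1
    then have "v \<notin> neighbours E ends {b}" "v \<notin> A' \<union> B'" using N A' B' disjoint by auto
    then have "{e\<in>?F. v \<in> ends e} = ?J a" using incident no_J no_M by simp
    then show ?thesis using card_edges_joining[OF assms(1) 1] by (simp add: sdeg_def)
  next
    case 2
    then have "v \<notin> neighbours E ends {a}" "v \<notin> A' \<union> B'" using N A' B' disjoint by auto
    then have "{e\<in>?F. v \<in> ends e} = ?J b" using incident no_J no_M by simp
    then show ?thesis using card_edges_joining[OF assms(1) 2] by (simp add: sdeg_def)
  next
    case 3
    then have "v \<notin> neighbours E ends {a}" "v \<notin> neighbours E ends {b}" using N A' B' disjoint by auto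
    then have "{e\<in>?F. v \<in> ends e} = {e\<in>M. v \<in> ends e}" using incident no_J by simp
    then show ?thesis using M(3) 3 by (simp add: sdeg_def)
  qed
qed

lemma ab_matching_stars_Un_matching:
  assumes "3 \<le> card A" "a \<in> A" "b \<in> B"
    and "A' = A - insert a (neighbours E ends {b})"
    and "B' = B - insert b (neighbours E ends {a})"
    and M: "M \<subseteq> E" "\<forall>e\<in>M. ends e \<subseteq> A' \<union> B'" "\<forall>v\<in>A' \<union> B'. sdeg M ends v = 1"
  shows "ab_matching V E ends a b ({e\<in>E. a \<in> ends e} \<union> {e\<in>E. b \<in> ends e} \<union> M)"
    (is "ab_matching V E ends a b ?F")
  unfolding ab_matching_def
proof (intro conjI ballI)
  show "?F \<subseteq> E" using M(1) by blast
  have "{e\<in>?F. w \<in> ends e} = {e\<in>E. w \<in> ends e}" if "w = a \<or> w = b" for w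
    using that M(1) by auto
  then show "sdeg ?F ends a = 3" "sdeg ?F ends b = 3"
    using assms(2,3) V_eq degree by (auto simp: sdeg_def)
  show "sdeg ?F ends v = 1" if "v \<in> V - {a, b}" for v
    using sdeg_stars_Un_matching[OF assms that] .
qed

lemma lambda_matchable_if_card_A_ge_3:
  assumes "3 \<le> card A" "a \<in> A" "b \<in> B"
  shows "lambda_matchable V E ends a b"
proof -
  interpret swap: cubic_brace V E ends B A by (rule swap_brace)
  define A' where "A' = A - insert a (neighbours E ends {b})"
  define B' where "B' = B - insert b (neighbours E ends {a})"
  obtain M where "M \<subseteq> E" "\<forall>e\<in>M. ends e \<subseteq> A' \<union> B'" "\<forall>v\<in>A' \<union> B'. sdeg M ends v = 1"
  proof (rule perfect_matching_if_Hall_condition)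
    show "A' \<subseteq> A" "B' \<subseteq> B" by (auto simp: A'_def B'_def)
    show "\<forall>S\<subseteq>A'. card S \<le> card (neighbours E ends S \<inter> B')"
      using Hall_condition_outside_closed_neighbourhoods[OF assms A'_def B'_def] by blast
    have "card (neighbours E ends {b}) = card (neighbours E ends {a})"
      using assms card_A_eq_card_B card_neighbours_singleton swap.card_neighbours_singleton by simp
    then have "card (insert a (neighbours E ends {b})) = card (insert b (neighbours E ends {a}))"
      using neighbours_singleton_sym[of a E ends b] finite_neighbours by (simp add: card_insert_if)
    moreover have "insert a (neighbours E ends {b}) \<subseteq> A" "insert b (neighbours E ends {a}) \<subseteq> B"
      using assms(2,3) neighbours_subset swap.neighbours_subset by auto
    ultimately show "card A' = card B'"
      unfolding A'_def B'_def using finite_neighbours card_A_eq_card_B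
      by (simp add: card_Diff_subset)
  qed
  then show ?thesis unfolding lambda_matchable_def
    using ab_matching_stars_Un_matching[OF assms A'_def B'_def] by blast
qed

lemma edges_joining_nonempty_if_card_A_eq_2:
  assumes "card A = 2" "x \<in> A" "y \<in> B"
  shows "card {e\<in>E. ends e = {x, y}} \<noteq> 0"
proof -
  have N: "neighbours E ends {x} \<subseteq> B" using assms(2) neighbours_subset by simp
  then have "card (neighbours E ends {x}) \<le> card B" using finite_B by (simp add: card_mono)
  moreover have "\<not> card (neighbours E ends {x}) \<le> card {x}"
    using eq_A_if_card_neighbours_le[of "{x}"] assms(1,2) by auto
  ultimately have "card (neighbours E ends {x}) = card B" using assms(1) card_A_eq_card_B by simp
  then have "neighbours E ends {x} = B" using N finite_B by (simp add: card_subset_eq)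
  then obtain e where "e \<in> E" "ends e = {x, y}" using assms(3) by (auto simp: neighbours_def)
  then show ?thesis using finite_E by auto
qed

lemma C4_multiplicities:
  assumes "card A = 2"
  obtains a a' b b' where "A = {a, a'}" "a \<noteq> a'" "B = {b, b'}" "b \<noteq> b'"
    "card {e\<in>E. ends e = {a, b}} = 2" "card {e\<in>E. ends e = {a', b}} = 1"
    "card {e\<in>E. ends e = {a', b'}} = 2" "card {e\<in>E. ends e = {a, b'}} = 1"
proof -
  interpret swap: cubic_brace V E ends B A by (rule swap_brace)
  let ?m = "\<lambda>x y. card {e\<in>E. ends e = {x, y}}"
  have split_B: "?m x y + ?m x' y = 3" if "y \<in> B" "A = {x, x'}" "x \<noteq> x'" for x x' y
    using swap.degree_split[OF that] by (simp add: insert_commute)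
  obtain a a' where A: "A = {a, a'}" "a \<noteq> a'" using assms by (auto simp: card_2_iff)
  obtain c c' where B: "B = {c, c'}" "c \<noteq> c'" using assms card_A_eq_card_B by (auto simp: card_2_iff)
  have "?m a c + ?m a c' = 3" using A B by (intro degree_split) auto
  moreover have "?m a c \<noteq> 0" "?m a c' \<noteq> 0"
    using edges_joining_nonempty_if_card_A_eq_2[OF assms] A B by auto
  ultimately consider "?m a c = 2" "?m a c' = 1" | "?m a c' = 2" "?m a c = 1" by linarith
  then obtain b b' where B': "B = {b, b'}" "b \<noteq> b'" "?m a b = 2" "?m a b' = 1"
  proof cases
    case 1
    then show ?thesis using B that[of c c'] by simp
  next
    case 2
    moreover have "B = {c', c}" using B by blast
    ultimately show ?thesis using B that[of c' c] by simp
  qed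
  moreover have "?m a' b = 1" "?m a' b' = 2"
    using split_B[of b a a'] split_B[of b' a a'] A B' by auto
  ultimately show ?thesis using that A by blast
qed

lemma mg_iso_C4_if_card_A_eq_2:
  assumes "card A = 2"
  shows "mg_iso V E ends C4_V C4_E C4_ends"
proof -
  obtain a a' b b' where A: "A = {a, a'}" "a \<noteq> a'" and B: "B = {b, b'}" "b \<noteq> b'"
    and m: "card {e\<in>E. ends e = {a, b}} = 2" "card {e\<in>E. ends e = {a', b}} = 1"
      "card {e\<in>E. ends e = {a', b'}} = 2" "card {e\<in>E. ends e = {a, b'}} = 1"
    by (rule C4_multiplicities[OF assms])
  then have V: "V = {a, b, a', b'}" and distinct: "a \<noteq> b" "a \<noteq> b'" "a' \<noteq> b" "a' \<noteq> b'"
    using V_eq disjoint by auto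
  define f where "f v = (if v = a then 0 else if v = b then 1 else if v = a' then 2 else 3::nat)" for v
  have fv: "f a = 0" "f b = 1" "f a' = 2" "f b' = 3"
    using A(2) B(2) distinct by (simp_all add: f_def)
  then have f: "f ` {a, b} = {0, 1}" "f ` {a', b} = {1, 2}" "f ` {a', b'} = {2, 3}" "f ` {a, b'} = {3, 0}"
    and image: "f ` V = C4_V"
    by (auto simp: V C4_V_def)
  have "card V = card C4_V" using A(2) B(2) distinct by (simp add: V C4_V_def)
  then have "inj_on f V" using image finite_V by (simp add: eq_card_imp_inj_on)
  then have bij: "bij_betw f V C4_V" using image by (simp add: bij_betw_def)
  have fibre: "{e\<in>E. f ` ends e = f ` P} = {e\<in>E. ends e = P}" if "P \<subseteq> V" for P
    using that \<open>inj_on f V\<close> ends_subset by (auto simp: inj_on_image_eq_iff)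
  have ends: "ends e \<in> {{a, b}, {a', b}, {a', b'}, {a, b'}}" if "e \<in> E" for e
    using that A B by (elim edge_ends) auto
  have C4_fibres: "{e'\<in>C4_E. C4_ends e' = {0, 1}} = {0, 1}" "{e'\<in>C4_E. C4_ends e' = {1, 2}} = {2}"
    "{e'\<in>C4_E. C4_ends e' = {2, 3}} = {3, 4}" "{e'\<in>C4_E. C4_ends e' = {3, 0}} = {5}"
    by (auto simp: C4_E_def C4_ends_def doubleton_eq_iff)
  show ?thesis
  proof (rule mg_isoI[OF bij finite_E, where K = "{{0, 1}, {1, 2}, {2, 3}, {3, 0}}"])
    show "\<forall>e\<in>E. f ` ends e \<in> {{0, 1}, {1, 2}, {2, 3}, {3, 0}}"
    proof
      fix e assume "e \<in> E"
      from ends[OF this] show "f ` ends e \<in> {{0, 1}, {1, 2}, {2, 3}, {3, 0}}"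
        by (elim insertE emptyE) (simp_all add: fv insert_commute)
    qed
    show "\<forall>e'\<in>C4_E. C4_ends e' \<in> {{0, 1}, {1, 2}, {2, 3}, {3, 0}}"
      by (auto simp: C4_E_def C4_ends_def)
    show "\<forall>k\<in>{{0, 1}, {1, 2}, {2, 3}, {3, 0}}.
        card {e\<in>E. f ` ends e = k} = card {e'\<in>C4_E. C4_ends e' = k}"
      using fibre[of "{a, b}"] fibre[of "{a', b}"] fibre[of "{a', b'}"] fibre[of "{a, b'}"]
        f m C4_fibres V by auto
  qed (simp add: C4_E_def)
qed

end

theorem proposition1p21:
  fixes V :: "'v set" and E :: "'e set" and ends :: "'e \<Rightarrow> 'v set" and A B :: "'v set"
  assumes "multigraph V E ends"
    and "cubic V E ends"
    and "brace V E ends A B"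
    and "\<not> mg_iso V E ends C4_V C4_E C4_ends"
  shows "(\<forall>a\<in>A. \<forall>b\<in>B. lambda_matchable V E ends a b) \<and>
         (\<not> mg_iso V E ends Theta_V Theta_E Theta_ends \<longrightarrow> rho V E ends A B = beta'_brace V)"
proof -
  interpret cubic_brace V E ends A B
    using assms(1-3) by unfold_locales (auto simp: brace_def matching_covered_def)
  have "A \<noteq> {}" using connected card_A_eq_card_B finite_B V_eq by (auto simp: connected_mg_def)
  then have "card A \<noteq> 0" using finite_A by simp
  then consider "card A = 1" | "card A = 2" | "3 \<le> card A" by linarith
  then show ?thesis
  proof cases
    case 1
    then show ?thesis using lambda_matchable_if_card_A_eq_1 mg_iso_Theta_if_card_A_eq_1 by blast
  next
    case 2
    then show ?thesis using mg_iso_C4_if_card_A_eq_2 assms(4) by blast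
  next
    case 3
    then have all: "\<forall>a\<in>A. \<forall>b\<in>B. lambda_matchable V E ends a b"
      using lambda_matchable_if_card_A_ge_3 by blast
    moreover have "beta'_brace V = card A * card B"
      using 3 card_V card_A_eq_card_B by (simp add: beta'_brace_def power2_eq_square)
    ultimately show ?thesis using rho_eq_if_lambda_matchable[OF all] by simp
  qed
qed

end
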